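(* Let $\sigma:\mathbb{R}\to\mathbb{R}$ be an increasing odd homeomorphism. The monoid generated by $h_\sigma$ and $v_\sigma$ and the monoid generated by $h_\sigma^{-1}$ and $v_\sigma^{-1}$ are both free (on the respective two generators).
   Context: $h_\sigma(x,y)=(x+\sigma^{-1}(y),y)$ and $v_\sigma(x,y)=(x,\sigma(x)+y)$ are bijections of $\mathbb{R}^2$; the monoid operation is composition. *)

theory Defs
  imports "HOL-Analysis.Analysis"
begin

definition hmap :: "(real \<Rightarrow> real) \<Rightarrow> real \<times> real \<Rightarrow> real \<times> real" where
  "hmap \<sigma> = (\<lambda>(x, y). (x + inv \<sigma> y, y))"

definition vmap :: "(real \<Rightarrow> real) \<Rightarrow> real \<times> real \<Rightarrow> real \<times> real" where
  "vmap \<sigma> = (\<lambda>(x, y). (x, \<sigma> x + y))"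

definition word_eval :: "('a \<Rightarrow> 'a) \<Rightarrow> ('a \<Rightarrow> 'a) \<Rightarrow> bool list \<Rightarrow> 'a \<Rightarrow> 'a" where
  "word_eval f g w = foldr (\<lambda>b acc. (if b then f else g) \<circ> acc) w id"

text \<open>The submonoid generated by f and g is free on f and g iff the evaluation map
  from the free monoid on two letters is injective.\<close>

definition free_monoid_on2 :: "('a \<Rightarrow> 'a) \<Rightarrow> ('a \<Rightarrow> 'a) \<Rightarrow> bool" where
  "free_monoid_on2 f g \<longleftrightarrow> inj (word_eval f g)"

end

theory Submission
  imports Defs
begin

text \<open>Ping-pong: h maps the open first quadrant Q into the part A of Q below the graph of
  \<sigma>, and v maps Q into the part B above it. So the outermost letter of a word is read off
  from whether the image of a point of Q lies in A or in B, and injectivity of the generators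
  cancels it. Freeness of the inverse monoid follows because w \<mapsto> rev w turns evaluation in
  the inverses into the inverse of an evaluation.\<close>

lemma word_eval_Nil [simp]: "word_eval f g [] = id"
  by (simp add: word_eval_def)

lemma word_eval_Cons [simp]:
  "word_eval f g (b # w) = (if b then f else g) \<circ> word_eval f g w"
  by (simp add: word_eval_def)

lemma word_eval_append: "word_eval f g (u @ v) = word_eval f g u \<circ> word_eval f g v"
  by (induction u) (simp_all add: comp_assoc)

lemma bij_word_eval: "bij f \<Longrightarrow> bij g \<Longrightarrow> bij (word_eval f g w)"
  by (induction w) (simp_all add: bij_comp)

lemma word_eval_inv:
  assumes "bij f" "bij g"
  shows "word_eval (inv f) (inv g) w = inv (word_eval f g (rev w))"
proof (induction w)
  case Nil
  show ?case by (simp add: inv_id)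
next
  case (Cons b w)
  define x where "x = (if b then f else g)"
  have "bij x" using assms by (simp add: x_def)
  have "inv (word_eval f g (rev (b # w))) = inv (word_eval f g (rev w) \<circ> x)"
    by (simp add: word_eval_append x_def)
  also have "\<dots> = inv x \<circ> inv (word_eval f g (rev w))"
    using \<open>bij x\<close> bij_word_eval[OF assms] by (simp add: o_inv_distrib)
  finally show ?case using Cons.IH by (simp add: x_def)
qed

lemma free_monoid_on2_inv:
  assumes "bij f" "bij g" "free_monoid_on2 f g"
  shows "free_monoid_on2 (inv f) (inv g)"
  unfolding free_monoid_on2_def
proof (rule injI)
  fix u v
  assume "word_eval (inv f) (inv g) u = word_eval (inv f) (inv g) v"
  then have "inv (word_eval f g (rev u)) = inv (word_eval f g (rev v))"
    by (simp add: word_eval_inv assms(1,2))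
  then have "word_eval f g (rev u) = word_eval f g (rev v)"
    by (metis bij_word_eval[OF assms(1,2)] inv_inv_eq)
  then show "u = v"
    using assms(3) by (simp add: free_monoid_on2_def inj_eq)
qed

lemma word_eval_mem_Un:
  assumes "f ` (A \<union> B) \<subseteq> A" "g ` (A \<union> B) \<subseteq> B" "p \<in> A \<union> B"
  shows "word_eval f g w p \<in> A \<union> B"
  using assms by (induction w) auto

lemma word_eval_Cons_mem:
  assumes "f ` (A \<union> B) \<subseteq> A" "g ` (A \<union> B) \<subseteq> B" "p \<in> A \<union> B"
  shows "word_eval f g (c # w) p \<in> (if c then A else B)"
  using assms word_eval_mem_Un[OF assms] by auto

lemma pingpong_free_monoid_on2:
  assumes inj: "inj f" "inj g"
    and maps: "f ` (A \<union> B) \<subseteq> A" "g ` (A \<union> B) \<subseteq> B"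
    and disjoint: "A \<inter> B = {}" and nonempty: "A \<noteq> {}" "B \<noteq> {}"
  shows "free_monoid_on2 f g"
proof -
  note Cons_mem = word_eval_Cons_mem[OF maps]
  have Cons_ne_Nil: "word_eval f g (c # u) \<noteq> word_eval f g []" for c u
  proof
    assume eq: "word_eval f g (c # u) = word_eval f g []"
    obtain p where p: "p \<in> (if c then B else A)"
      using nonempty by (cases c) auto
    then have "word_eval f g (c # u) p \<in> (if c then A else B)"
      by (intro Cons_mem) (auto split: if_splits)
    with eq p disjoint show False by (cases c) auto
  qed
  have same_head: "c = d" if eq: "word_eval f g (c # u) = word_eval f g (d # v)" for c d u v
  proof -
    obtain p where p: "p \<in> A \<union> B" using nonempty by blast
    have "word_eval f g (d # v) p \<in> (if c then A else B) \<inter> (if d then A else B)"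
      using Cons_mem[OF p, of c u] Cons_mem[OF p, of d v] eq by (simp del: word_eval_Cons)
    with disjoint show "c = d" by (auto split: if_splits)
  qed
  have "u = v" if "word_eval f g u = word_eval f g v" for u v
    using that
  proof (induction u arbitrary: v)
    case Nil
    then show ?case
      using Cons_ne_Nil by (cases v) (auto simp del: word_eval_Cons word_eval_Nil)
  next
    case (Cons c u)
    obtain d v' where v: "v = d # v'"
      using Cons.prems Cons_ne_Nil by (cases v) (auto simp del: word_eval_Cons word_eval_Nil)
    have "c = d" using Cons.prems unfolding v by (rule same_head)
    have "inj (if c then f else g)" using inj by simp
    then have "word_eval f g u = word_eval f g v'"
      using Cons.prems by (simp add: v \<open>c = d\<close> fun_eq_iff inj_eq)
    then show ?case using Cons.IH v \<open>c = d\<close> by simp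
  qed
  then show ?thesis unfolding free_monoid_on2_def by (rule injI)
qed

lemma bij_hmap: "bij (hmap \<sigma>)"
  by (rule bij_betw_byWitness[where f' = "\<lambda>(x, y). (x - inv \<sigma> y, y)"])
    (auto simp: hmap_def)

lemma bij_vmap: "bij (vmap \<sigma>)"
  by (rule bij_betw_byWitness[where f' = "\<lambda>(x, y). (x, y - \<sigma> x)"])
    (auto simp: vmap_def)

lemma
  fixes \<sigma> :: "real \<Rightarrow> real"
  assumes "surj \<sigma>" "strict_mono \<sigma>" "\<sigma> 0 = 0"
  shows hmap_quadrant_below_graph:
      "hmap \<sigma> ` {(x, y). x > 0 \<and> y > 0} \<subseteq> {(x, y). x > 0 \<and> y > 0 \<and> y < \<sigma> x}"
    and vmap_quadrant_above_graph:
      "vmap \<sigma> ` {(x, y). x > 0 \<and> y > 0} \<subseteq> {(x, y). x > 0 \<and> y > 0 \<and> \<sigma> x < y}"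
proof -
  have less_iff: "\<sigma> a < \<sigma> b \<longleftrightarrow> a < b" for a b
    using assms(2) by (simp add: strict_mono_less)
  have pos_iff: "\<sigma> a > 0 \<longleftrightarrow> a > 0" for a
    using less_iff[of 0 a] assms(3) by simp
  have right_inv: "\<sigma> (inv \<sigma> y) = y" for y
    using assms(1) by (simp add: surj_f_inv_f)
  show "hmap \<sigma> ` {(x, y). x > 0 \<and> y > 0} \<subseteq> {(x, y). x > 0 \<and> y > 0 \<and> y < \<sigma> x}"
  proof (rule image_subsetI)
    fix p :: "real \<times> real"
    assume "p \<in> {(x, y). x > 0 \<and> y > 0}"
    then obtain x y where p: "p = (x, y)" and "x > 0" "y > 0" by (cases p) auto
    have "inv \<sigma> y > 0" using pos_iff[of "inv \<sigma> y"] right_inv[of y] \<open>y > 0\<close> by simp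
    moreover have "y < \<sigma> (x + inv \<sigma> y)"
      using less_iff[of "inv \<sigma> y" "x + inv \<sigma> y"] right_inv[of y] \<open>x > 0\<close> by simp
    ultimately show "hmap \<sigma> p \<in> {(x, y). x > 0 \<and> y > 0 \<and> y < \<sigma> x}"
      using \<open>x > 0\<close> \<open>y > 0\<close> by (simp add: p hmap_def)
  qed
  show "vmap \<sigma> ` {(x, y). x > 0 \<and> y > 0} \<subseteq> {(x, y). x > 0 \<and> y > 0 \<and> \<sigma> x < y}"
  proof (rule image_subsetI)
    fix p :: "real \<times> real"
    assume "p \<in> {(x, y). x > 0 \<and> y > 0}"
    then obtain x y where p: "p = (x, y)" and "x > 0" "y > 0" by (cases p) auto
    moreover have "\<sigma> x > 0" using pos_iff \<open>x > 0\<close> by simp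
    ultimately show "vmap \<sigma> p \<in> {(x, y). x > 0 \<and> y > 0 \<and> \<sigma> x < y}"
      by (simp add: vmap_def)
  qed
qed

lemma free_monoid_on2_hmap_vmap:
  fixes \<sigma> :: "real \<Rightarrow> real"
  assumes "surj \<sigma>" "strict_mono \<sigma>" "\<sigma> 0 = 0"
  shows "free_monoid_on2 (hmap \<sigma>) (vmap \<sigma>)"
proof (rule pingpong_free_monoid_on2)
  let ?A = "{(x, y). x > 0 \<and> y > 0 \<and> y < \<sigma> x}"
  let ?B = "{(x, y). x > 0 \<and> y > 0 \<and> \<sigma> x < y}"
  show "inj (hmap \<sigma>)" "inj (vmap \<sigma>)"
    by (simp_all add: bij_is_inj bij_hmap bij_vmap)
  have quadrant: "?A \<union> ?B \<subseteq> {(x, y). x > 0 \<and> y > 0}" by auto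
  show "hmap \<sigma> ` (?A \<union> ?B) \<subseteq> ?A"
    using image_mono[OF quadrant] hmap_quadrant_below_graph[OF assms] by (rule order_trans)
  show "vmap \<sigma> ` (?A \<union> ?B) \<subseteq> ?B"
    using image_mono[OF quadrant] vmap_quadrant_above_graph[OF assms] by (rule order_trans)
  show "?A \<inter> ?B = {}" by auto
  have "\<sigma> 1 > 0" using assms(2,3) strict_monoD[of \<sigma> 0 1] by simp
  then have "(1, \<sigma> 1 / 2) \<in> ?A" "(1, 2 * \<sigma> 1) \<in> ?B" by auto
  then show "?A \<noteq> {}" "?B \<noteq> {}" by blast+
qed

theorem lemma1:
  fixes \<sigma> :: "real \<Rightarrow> real"
  assumes homeo: "\<exists>\<tau>. homeomorphism UNIV UNIV \<sigma> \<tau>"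
    and incr: "strict_mono \<sigma>"
    and odd: "\<And>x. \<sigma> (- x) = - \<sigma> x"
  shows "free_monoid_on2 (hmap \<sigma>) (vmap \<sigma>)
     \<and> free_monoid_on2 (inv (hmap \<sigma>)) (inv (vmap \<sigma>))"
proof -
  have "surj \<sigma>" using homeo by (auto simp: homeomorphism_def)
  moreover have "\<sigma> 0 = 0" using odd[of 0] by simp
  ultimately have "free_monoid_on2 (hmap \<sigma>) (vmap \<sigma>)"
    using free_monoid_on2_hmap_vmap incr by blast
  then show ?thesis
    using free_monoid_on2_inv[OF bij_hmap bij_vmap] by blast
qed

end
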